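(* Let $O,O'$ be sets of Boolean functions with $O\preceq O'$, and let $\textsc{prop}$ be a finite set of propositional variables. Then $\mathrm{PL}_O[\textsc{prop}]\leq_{pc}\mathrm{PL}_{O'}[\textsc{prop}]$.
   Context: Boolean functions are maps $\{0,1\}^n\to\{0,1\}$, $n\ge1$ (constants as constant unary functions); $O\preceq O'$ means the clone generated by $O$ (smallest set containing $O$ and all projections, closed under composition) is contained in that generated by $O'$. $\mathrm{PL}_O[\textsc{prop}]$ is the set of formulas $\phi::=x\mid f(\phi_1,\dots,\phi_n)$ with $x\in\textsc{prop}$ and $f\in O$. It is viewed as the concept class whose concepts are these formulas, whose examples are the truth assignments $V:\textsc{prop}\to\{0,1\}$, and where $\lambda(\phi)$ is the set of assignments satisfying $\phi$. For concept classes $\mathcal{C}_i=(C_i,E_i,\lambda_i)$, $\mathcal{C}_1\leq_{pc}\mathcal{C}_2$ means there are $f:C_1\to C_2$ and $h:E_1\to E_2$ such that (i) for all $c\in C_1,e\in E_1$: $e\in\lambda_1(c)$ iff $h(e)\in\lambda_2(f(c))$; and (ii) for each $e\in E_2$, either $e\in\lambda_2(f(c))$ for all $c\in C_1$, or for no $c\in C_1$, or there is $e'\in E_1$ with $\{c\mid e\in\lambda_2(f(c))\}=\{c\mid e'\in\lambda_1(c)\}$. *)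

theory Defs
  imports Main
begin

text \<open>A Boolean function is represented as a pair (n, f) of its arity n \<ge> 1 and a
map f on bit-lists; f is canonically False on lists of the wrong length, so that
each n-ary Boolean function {0,1}^n \<rightarrow> {0,1} has exactly one representative.\<close>

type_synonym bfun = "nat \<times> (bool list \<Rightarrow> bool)"

definition is_bfun :: "bfun \<Rightarrow> bool" where
  "is_bfun F \<longleftrightarrow> fst F \<ge> 1 \<and> (\<forall>xs. length xs \<noteq> fst F \<longrightarrow> snd F xs = False)"

definition proj :: "nat \<Rightarrow> nat \<Rightarrow> bfun" where
  "proj n i = (n, \<lambda>xs. if length xs = n then xs ! i else False)"

definition compose :: "bfun \<Rightarrow> nat \<Rightarrow> bfun list \<Rightarrow> bfun" where
  "compose F n Gs = (n, \<lambda>xs. if length xs = n then snd F (map (\<lambda>G. snd G xs) Gs) else False)"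

inductive_set clone :: "bfun set \<Rightarrow> bfun set" for Ops :: "bfun set" where
  base: "F \<in> Ops \<Longrightarrow> F \<in> clone Ops"
| proj: "1 \<le> n \<Longrightarrow> i < n \<Longrightarrow> proj n i \<in> clone Ops"
| comp: "F \<in> clone Ops \<Longrightarrow> length Gs = fst F \<Longrightarrow> 1 \<le> n \<Longrightarrow>
         (\<forall>G\<in>set Gs. G \<in> clone Ops \<and> fst G = n) \<Longrightarrow> compose F n Gs \<in> clone Ops"

definition clone_le :: "bfun set \<Rightarrow> bfun set \<Rightarrow> bool" (infix "\<preceq>\<^sub>c" 50) where
  "Ops \<preceq>\<^sub>c Ops' \<longleftrightarrow> clone Ops \<subseteq> clone Ops'"

datatype 'v form = Var 'v | App bfun "'v form list"

fun eval :: "('v \<Rightarrow> bool) \<Rightarrow> 'v form \<Rightarrow> bool" where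
  "eval V (Var x) = V x"
| "eval V (App F args) = snd F (map (eval V) args)"

inductive_set PL :: "bfun set \<Rightarrow> 'v set \<Rightarrow> 'v form set" for Ops :: "bfun set" and P :: "'v set" where
  var: "x \<in> P \<Longrightarrow> Var x \<in> PL Ops P"
| app: "F \<in> Ops \<Longrightarrow> length args = fst F \<Longrightarrow> (\<forall>a\<in>set args. a \<in> PL Ops P) \<Longrightarrow> App F args \<in> PL Ops P"

definition assignments :: "'v set \<Rightarrow> ('v \<Rightarrow> bool) set" where
  "assignments P = {V. \<forall>x. x \<notin> P \<longrightarrow> V x = False}"

definition models :: "'v set \<Rightarrow> 'v form \<Rightarrow> ('v \<Rightarrow> bool) set" where
  "models P \<phi> = {V \<in> assignments P. eval V \<phi>}"

type_synonym ('c, 'e) concept_class = "'c set \<times> 'e set \<times> ('c \<Rightarrow> 'e set)"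

definition PL_class :: "bfun set \<Rightarrow> 'v set \<Rightarrow> ('v form, 'v \<Rightarrow> bool) concept_class" where
  "PL_class Ops P = (PL Ops P, assignments P, models P)"

definition pc_reducible :: "('c1, 'e1) concept_class \<Rightarrow> ('c2, 'e2) concept_class \<Rightarrow> bool" where
  "pc_reducible K1 K2 \<longleftrightarrow>
    (case K1 of (C1, E1, l1) \<Rightarrow> case K2 of (C2, E2, l2) \<Rightarrow>
      (\<exists>f h. (\<forall>c\<in>C1. f c \<in> C2) \<and> (\<forall>e\<in>E1. h e \<in> E2) \<and>
        (\<forall>c\<in>C1. \<forall>e\<in>E1. e \<in> l1 c \<longleftrightarrow> h e \<in> l2 (f c)) \<and>
        (\<forall>e\<in>E2. (\<forall>c\<in>C1. e \<in> l2 (f c)) \<or> (\<forall>c\<in>C1. e \<notin> l2 (f c)) \<or>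
                 (\<exists>e'\<in>E1. {c\<in>C1. e \<in> l2 (f c)} = {c\<in>C1. e' \<in> l1 c}))))"

end

theory Submission
  imports Defs
begin

text \<open>Every member of the clone generated by O' is expressible in PL_O', by induction on
the generation of the clone: projections pick an argument and compositions substitute
formulas for the arguments. Hence each connective of O can be replaced by an equivalent
PL_O' context, which translates every PL_O formula into an equivalent PL_O' formula.
Translating concepts this way and keeping the assignments fixed is a pc-reduction.\<close>

lemma clone_definable_in_PL:
  assumes "G \<in> clone Ops" "length ps = fst G" "set ps \<subseteq> PL Ops P"
  shows "\<exists>q\<in>PL Ops P. \<forall>V. eval V q = snd G (map (eval V) ps)"
  using assms
proof (induction G arbitrary: ps rule: clone.induct)
  case (base F)
  then show ?case by (intro bexI[of _ "App F ps"]) (auto intro: PL.app)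
next
  case (proj n i)
  then show ?case by (intro bexI[of _ "ps ! i"]) (auto simp: proj_def)
next
  case (comp F Gs n)
  have len_ps: "length ps = n"
    using comp.prems(1) by (simp add: compose_def)
  have "\<forall>G\<in>set Gs. \<exists>q\<in>PL Ops P. \<forall>V. eval V q = snd G (map (eval V) ps)"
    using comp.IH(2) comp.prems(2) len_ps by auto
  then obtain g where g: "\<forall>G\<in>set Gs. g G \<in> PL Ops P \<and>
      (\<forall>V. eval V (g G) = snd G (map (eval V) ps))"
    by (metis bchoice)
  obtain r where r: "r \<in> PL Ops P" "\<forall>V. eval V r = snd F (map (eval V) (map g Gs))"
    using comp.IH(1)[of "map g Gs"] comp.hyps(2) g by auto
  have "eval V r = snd (compose F n Gs) (map (eval V) ps)" for V
    using r(2) g len_ps by (simp add: compose_def cong: map_cong)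
  then show ?case using r(1) by blast
qed

lemma PL_translate_clone_le:
  assumes "Ops \<preceq>\<^sub>c Ops'" "\<phi> \<in> PL Ops P"
  shows "\<exists>\<psi>\<in>PL Ops' P. \<forall>V. eval V \<psi> = eval V \<phi>"
  using assms(2)
proof (induction \<phi> rule: PL.induct)
  case (var x)
  then show ?case by (intro bexI[of _ "Var x"]) (auto intro: PL.var)
next
  case (app F args)
  then obtain g where g: "\<forall>a\<in>set args. g a \<in> PL Ops' P \<and> (\<forall>V. eval V (g a) = eval V a)"
    by (metis bchoice)
  have "F \<in> clone Ops'"
    using assms(1) app.hyps(1) clone.base unfolding clone_le_def by blast
  then obtain q where "q \<in> PL Ops' P" "\<forall>V. eval V q = snd F (map (eval V) (map g args))"
    using clone_definable_in_PL[of F Ops' "map g args" P] app.hyps(2) g by auto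
  with g show ?case by (auto cong: map_cong)
qed

lemma pc_reducible_by_concept_map:
  assumes "\<forall>c\<in>C1. f c \<in> C2 \<and> l2 (f c) = l1 c"
  shows "pc_reducible (C1, E, l1) (C2, E, l2)"
  unfolding pc_reducible_def prod.case
proof (intro exI conjI)
  show "\<forall>c\<in>C1. f c \<in> C2" using assms by blast
  show "\<forall>e\<in>E. id e \<in> E" by simp
  show "\<forall>c\<in>C1. \<forall>e\<in>E. e \<in> l1 c \<longleftrightarrow> id e \<in> l2 (f c)" using assms by simp
  show "\<forall>e\<in>E. (\<forall>c\<in>C1. e \<in> l2 (f c)) \<or> (\<forall>c\<in>C1. e \<notin> l2 (f c)) \<or>
      (\<exists>e'\<in>E. {c\<in>C1. e \<in> l2 (f c)} = {c\<in>C1. e' \<in> l1 c})"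
    using assms by blast
qed

theorem propositionA6:
  fixes Ops Ops' :: "bfun set" and P :: "'v set"
  assumes "\<forall>F\<in>Ops. is_bfun F" and "\<forall>F\<in>Ops'. is_bfun F"
    and "Ops \<preceq>\<^sub>c Ops'"
    and "finite P"
  shows "pc_reducible (PL_class Ops P) (PL_class Ops' P)"
proof -
  obtain f where f: "\<forall>\<phi>\<in>PL Ops P. f \<phi> \<in> PL Ops' P \<and> (\<forall>V. eval V (f \<phi>) = eval V \<phi>)"
    using PL_translate_clone_le[OF assms(3)] by (metis bchoice)
  then have "\<forall>\<phi>\<in>PL Ops P. f \<phi> \<in> PL Ops' P \<and> models P (f \<phi>) = models P \<phi>"
    by (simp add: models_def)
  then show ?thesis
    unfolding PL_class_def by (rule pc_reducible_by_concept_map)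
qed

end
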